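(* Let $\kappa=7/8$ and $9/10<\alpha<1$. Define on $[-\pi,\pi]$ (extended $2\pi$-periodically) $\bar\omega_\alpha=\mathrm{sgn}(x)|\sin x|^\alpha$, $\bar u_\alpha=\mathrm{sgn}(x)|\sin x|^{(1+\alpha)/2}$, let $\bar\psi_\alpha$ be the odd $2\pi$-periodic solution of $-\bar\psi_\alpha''=\bar\omega_\alpha$, and set $\omega_{\mathrm{res}}=\bar\omega_\alpha-\sin x$, $u_{\mathrm{res}}=\bar u_\alpha-\sin x$, $\psi_{\mathrm{res}}=\bar\psi_\alpha-\sin x$. Then, with constants independent of $\alpha$: (1) $|\partial_x^i\omega_{\mathrm{res}}|+|\partial_x^iu_{\mathrm{res}}|\lesssim|\alpha-1|\,|\sin x|^{\kappa-i}$ for $i=0,1,2,3$, and $\|\psi_{\mathrm{res}}\|_{L^\infty}+\|\psi_{\mathrm{res},x}\|_{L^\infty}\lesssim|\alpha-1|$; (2) $\big|\tfrac{\alpha-1}{2}\bar u_{\alpha,x}-\sin x\,u_{\mathrm{res},xx}\big|+\big|\sin x\,\partial_x\big[\tfrac{\alpha-1}{2}\bar u_{\alpha,x}-\sin x\,u_{\mathrm{res},xx}\big]\big|\lesssim|\alpha-1|^{1/2}|x|\,|\sin x|^{\alpha-1}$ for $x\in[-\pi,\pi]\setminus\{0,\pm\pi\}$.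
   Context: Subscripts $x$ denote derivatives in $x$. *)

theory Defs
  imports "HOL-Analysis.Analysis"
begin

definition kappa :: real where "kappa = 7/8"

text \<open>On [-pi,pi] we have
  sgn x |sin x|^a = sgn (sin x) |sin x|^a, and the right-hand side is 2pi-periodic,
  so it is exactly the periodic extension.\<close>
definition omega_bar :: "real \<Rightarrow> real \<Rightarrow> real" where
  "omega_bar \<alpha> x = sgn (sin x) * \<bar>sin x\<bar> powr \<alpha>"

definition u_bar :: "real \<Rightarrow> real \<Rightarrow> real" where
  "u_bar \<alpha> x = sgn (sin x) * \<bar>sin x\<bar> powr ((1 + \<alpha>) / 2)"

definition omega_res :: "real \<Rightarrow> real \<Rightarrow> real" where
  "omega_res \<alpha> x = omega_bar \<alpha> x - sin x"

definition u_res :: "real \<Rightarrow> real \<Rightarrow> real" where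
  "u_res \<alpha> x = u_bar \<alpha> x - sin x"

definition is_psi_bar :: "real \<Rightarrow> (real \<Rightarrow> real) \<Rightarrow> (real \<Rightarrow> real) \<Rightarrow> bool" where
  "is_psi_bar \<alpha> \<psi> \<psi>' \<longleftrightarrow>
     (\<forall>x. \<psi> (- x) = - \<psi> x) \<and> (\<forall>x. \<psi> (x + 2 * pi) = \<psi> x) \<and>
     (\<forall>x. (\<psi> has_real_derivative \<psi>' x) (at x)) \<and>
     (\<forall>x. (\<psi>' has_real_derivative (- omega_bar \<alpha> x)) (at x))"

definition G :: "real \<Rightarrow> real \<Rightarrow> real" where
  "G \<alpha> x = (\<alpha> - 1) / 2 * deriv (u_bar \<alpha>) x - sin x * (deriv ^^ 2) (u_res \<alpha>) x"

end

theory Submission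
  imports Defs "HOL-Library.Periodic_Fun"
begin

text \<open>
  Off the zeros of \<open>sin\<close> we have \<open>omega_bar a y = sin y * \<bar>sin y\<bar> powr (a - 1)\<close>, and
  \<open>u_bar \<alpha> = omega_bar ((1 + \<alpha>) / 2)\<close>. Since the derivative of \<open>\<bar>sin y\<bar> powr b\<close> is
  \<open>b * \<bar>sin y\<bar> powr b * cos y / sin y\<close>, the first three derivatives are \<open>\<bar>sin y\<bar> powr (a - 1)\<close>
  times trigonometric rational functions whose coefficients tend to those of the derivatives of
  \<open>sin\<close> as \<open>a \<rightarrow> 1\<close>. All residual estimates then reduce to
  \<open>\<bar>sin y\<bar> powr (a - 1) - 1 \<le> 40 (1 - a) \<bar>sin y\<bar> powr (-1/8)\<close> for \<open>9/10 \<le> a \<le> 1\<close>: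
  a factor \<open>1 - a\<close> is gained at the price of \<open>\<bar>sin y\<bar> powr (kappa - 1)\<close>.

  The difference \<open>\<psi> - sin\<close> is odd and \<open>2 pi\<close>-periodic with second derivative \<open>- omega_res \<alpha>\<close>,
  which is \<open>O(1 - \<alpha>)\<close>. It vanishes at \<open>0\<close> and \<open>pi\<close>, so its derivative vanishes in between,
  and two applications of the mean value theorem over a period bound both.

  In \<open>G\<close> and \<open>sin x * deriv G\<close> the leading terms cancel; what remains carries a factor
  \<open>1 - cos x\<close> or \<open>(sin x)\<^sup>2 * \<bar>sin x\<bar> powr (-1/8)\<close>, both bounded by \<open>\<bar>x\<bar>\<close>.
\<close>

section \<open>Derivatives of \<open>omega_bar\<close>\<close>

lemma eventually_sgn_sin_eq:
  fixes x :: real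
  assumes "sin x \<noteq> 0"
  shows "eventually (\<lambda>y. sgn (sin y) = sgn (sin x)) (nhds x)"
proof -
  have "isCont (\<lambda>y. sin x * sin y) x"
    by (intro continuous_intros)
  then have "((\<lambda>y. sin x * sin y) \<longlongrightarrow> sin x * sin x) (nhds x)"
    using tendsto_at_iff_tendsto_nhds[of "\<lambda>y. sin x * sin y" x] by (simp add: isCont_def)
  then have "eventually (\<lambda>y. 0 < sin x * sin y) (nhds x)"
    by (rule order_tendstoD) (use assms not_real_square_gt_zero in blast)
  then show ?thesis
    by (rule eventually_mono) (auto simp: zero_less_mult_iff)
qed

lemma has_real_derivative_abs_sin_powr:
  fixes x :: real
  assumes "sin x \<noteq> 0"
  shows "((\<lambda>y. \<bar>sin y\<bar> powr b) has_real_derivative b * \<bar>sin x\<bar> powr b * cos x / sin x) (at x)"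
proof -
  define w where "w = sgn (sin x)"
  have w: "w * w = 1" "\<bar>sin x\<bar> = w * sin x" using assms by (auto simp: w_def sgn_if)
  have "((\<lambda>y. (w * sin y) powr b) has_real_derivative b * (w * sin x) powr (b - 1) * (w * cos x)) (at x)"
    using assms w by (auto intro!: derivative_eq_intros)
  moreover have "b * (w * sin x) powr (b - 1) * (w * cos x) = b * \<bar>sin x\<bar> powr b * cos x / sin x"
    using assms w by (simp add: powr_diff field_simps)
  moreover have "eventually (\<lambda>y. \<bar>sin y\<bar> powr b = (w * sin y) powr b) (nhds x)"
    using eventually_sgn_sin_eq[OF assms] by (rule eventually_mono) (simp add: w_def abs_sgn mult.commute)
  ultimately show ?thesis
    using DERIV_cong_ev[OF refl _ refl] by metis
qed

text \<open>This also holds at the zeros of \<open>sin\<close>, because \<open>0 powr b = 0\<close>.\<close>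

lemma omega_bar_eq: "omega_bar a = (\<lambda>y. sin y * \<bar>sin y\<bar> powr (a - 1))"
proof
  fix y
  show "omega_bar a y = sin y * \<bar>sin y\<bar> powr (a - 1)"
    by (cases "sin y = 0") (auto simp: omega_bar_def powr_diff sgn_if)
qed

definition omega_bar' :: "real \<Rightarrow> real \<Rightarrow> real" where
  "omega_bar' a y = a * \<bar>sin y\<bar> powr (a - 1) * cos y"

definition omega_bar'' :: "real \<Rightarrow> real \<Rightarrow> real" where
  "omega_bar'' a y = a * \<bar>sin y\<bar> powr (a - 1) * ((a - 1) * (cos y)\<^sup>2 / sin y - sin y)"

definition omega_bar''' :: "real \<Rightarrow> real \<Rightarrow> real" where
  "omega_bar''' a y =
     a * \<bar>sin y\<bar> powr (a - 1) * ((a - 1) * (a - 2) * (cos y)^3 / (sin y)\<^sup>2 - (3 * a - 2) * cos y)"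

lemma has_real_derivative_omega_bar:
  "sin x \<noteq> 0 \<Longrightarrow> (omega_bar a has_real_derivative omega_bar' a x) (at x)"
  unfolding omega_bar_eq omega_bar'_def
  by (rule has_real_derivative_abs_sin_powr derivative_eq_intros refl | assumption)+
    (simp add: field_simps power2_eq_square del: sin_cos_squared_add3)

lemma has_real_derivative_omega_bar':
  "sin x \<noteq> 0 \<Longrightarrow> (omega_bar' a has_real_derivative omega_bar'' a x) (at x)"
  unfolding omega_bar'_def[abs_def] omega_bar''_def
  by (rule has_real_derivative_abs_sin_powr derivative_eq_intros refl | assumption)+
    (simp add: field_simps power2_eq_square del: sin_cos_squared_add3)

lemma has_real_derivative_omega_bar'':
  "sin x \<noteq> 0 \<Longrightarrow> (omega_bar'' a has_real_derivative omega_bar''' a x) (at x)"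
  unfolding omega_bar''_def[abs_def] omega_bar'''_def
  by (rule has_real_derivative_abs_sin_powr derivative_eq_intros refl | assumption)+
    (simp add: field_simps power2_eq_square power3_eq_cube del: sin_cos_squared_add3)

lemma deriv_deriv_eq_on_open:
  fixes f g :: "real \<Rightarrow> real"
  assumes "open U" "x \<in> U" "\<And>y. y \<in> U \<Longrightarrow> deriv f y = g y"
    and "(g has_real_derivative g') (at x)"
  shows "deriv (deriv f) x = g'"
proof -
  have "eventually (\<lambda>y. deriv f y = g y) (nhds x)"
    using eventually_nhds_in_open[OF assms(1,2)] by (rule eventually_mono) (rule assms(3))
  then have "deriv (deriv f) x = deriv g x"
    by (rule deriv_cong_ev) (rule refl)
  with assms(4) show ?thesis
    by (simp add: DERIV_imp_deriv)
qed

lemma open_sin_neq_zero: "open {x :: real. sin x \<noteq> 0}"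
  by (intro open_Collect_neq continuous_intros)

lemma higher_deriv_omega_res:
  fixes x :: real
  assumes "sin x \<noteq> 0"
  shows "deriv (omega_res a) x = omega_bar' a x - cos x"
    and "(deriv ^^ 2) (omega_res a) x = omega_bar'' a x + sin x"
    and "(deriv ^^ 3) (omega_res a) x = omega_bar''' a x + cos x"
proof -
  define U where "U = {y::real. sin y \<noteq> 0}"
  have U: "open U"
    unfolding U_def by (rule open_sin_neq_zero)
  have d1: "deriv (omega_res a) y = omega_bar' a y - cos y" if "y \<in> U" for y
    unfolding omega_res_def[abs_def] using that
    by (intro DERIV_imp_deriv derivative_eq_intros refl) (auto simp: U_def has_real_derivative_omega_bar)
  have d2: "deriv (deriv (omega_res a)) y = omega_bar'' a y + sin y" if "y \<in> U" for y
    using that by (intro deriv_deriv_eq_on_open[OF U that d1] derivative_eq_intros refl)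
      (auto simp: U_def has_real_derivative_omega_bar')
  have d3: "deriv (deriv (deriv (omega_res a))) y = omega_bar''' a y + cos y" if "y \<in> U" for y
    using that by (intro deriv_deriv_eq_on_open[OF U that d2] derivative_eq_intros refl)
      (auto simp: U_def has_real_derivative_omega_bar'')
  show "deriv (omega_res a) x = omega_bar' a x - cos x"
    using d1 assms by (simp add: U_def)
  show "(deriv ^^ 2) (omega_res a) x = omega_bar'' a x + sin x"
    using d2 assms by (simp add: U_def numeral_2_eq_2)
  show "(deriv ^^ 3) (omega_res a) x = omega_bar''' a x + cos x"
    using d3 assms by (simp add: U_def numeral_3_eq_3)
qed

lemma u_bar_eq_omega_bar: "u_bar \<alpha> = omega_bar ((1 + \<alpha>) / 2)"
  by (simp add: fun_eq_iff u_bar_def omega_bar_def)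

lemma u_res_eq_omega_res: "u_res \<alpha> = omega_res ((1 + \<alpha>) / 2)"
  by (simp add: fun_eq_iff u_res_def omega_res_def u_bar_eq_omega_bar)

lemma powr_exponent_near_zero_bounds:
  fixes S a :: real
  assumes S: "0 < S" "S \<le> 1" and a: "9/10 \<le> a" "a \<le> 1"
  shows "1 \<le> S powr (a - 1)" and "S powr (a - 1) \<le> S powr (-1/8)"
    and "S powr (a - 1) - 1 \<le> 40 * (1 - a) * S powr (-1/8)"
proof -
  define L where "L = - ln S"
  define e where "e = 1 - a"
  have L: "0 \<le> L" and e: "0 \<le> e" "e \<le> 1/10"
    using S a by (auto simp: L_def e_def)
  have exp_form: "S powr r = exp (- r * L)" for r
    using S by (simp add: powr_def L_def)
  have P: "S powr (a - 1) = exp (e * L)"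
    by (simp add: exp_form e_def)
  show "1 \<le> S powr (a - 1)"
    unfolding P using L e by simp
  show "S powr (a - 1) \<le> S powr (-1/8)"
    unfolding P exp_form using L e mult_right_mono[of e "1/8" L] by (simp add: e_def)
  have "exp (e * L) - 1 \<le> e * L * exp (e * L)"
    using exp_ge_add_one_self[of "- (e * L)"] by (simp add: exp_minus field_simps)
  also have "\<dots> \<le> e * (40 * exp (L / 40)) * exp (L / 10)"
  proof (intro mult_mono mult_left_mono)
    show "L \<le> 40 * exp (L / 40)"
      using exp_ge_add_one_self[of "L / 40"] by linarith
    show "exp (e * L) \<le> exp (L / 10)"
      using L e mult_right_mono[of e "1/10" L] by simp
  qed (use e L in auto)
  also have "\<dots> = 40 * e * exp (L / 8)"
    by (simp add: exp_add[symmetric] algebra_simps)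
  finally show "S powr (a - 1) - 1 \<le> 40 * (1 - a) * S powr (-1/8)"
    unfolding P exp_form by (simp add: e_def)
qed

lemma abs_mult_sub_one_le:
  fixes a P Q :: real
  assumes "a \<le> 1" "1 \<le> P" "P \<le> Q" "P - 1 \<le> 40 * (1 - a) * Q"
  shows "\<bar>a * P - 1\<bar> \<le> 41 * (1 - a) * Q"
proof -
  define X Y where "X = (1 - a) * P" and "Y = (1 - a) * Q"
  have "0 \<le> X" "X \<le> Y"
    using assms by (auto simp: X_def Y_def intro: mult_left_mono)
  moreover have "a * P - 1 = (P - 1) - X" "41 * (1 - a) * Q = 41 * Y" "P - 1 \<le> 40 * Y"
    using assms by (simp_all add: X_def Y_def algebra_simps)
  ultimately show ?thesis
    using assms by (simp add: abs_le_iff)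
qed

lemma abs_cubic_mult_sub_one_le:
  fixes a P Q :: real
  assumes "0 \<le> a" "a \<le> 1" "1 \<le> P" "P \<le> Q" "P - 1 \<le> 40 * (1 - a) * Q"
  shows "\<bar>a * (3 * a - 2) * P - 1\<bar> \<le> 44 * (1 - a) * Q"
proof -
  define X Y where "X = (1 - a) * ((1 + 3 * a) * P)" and "Y = (1 - a) * Q"
  have "0 \<le> X"
    using assms by (simp add: X_def)
  moreover have "X \<le> (1 - a) * (4 * Q)"
    unfolding X_def using assms by (intro mult_left_mono mult_mono) auto
  moreover have "(1 - a) * (4 * Q) = 4 * Y"
    by (simp add: Y_def)
  moreover have "a * (3 * a - 2) * P - 1 = (P - 1) - X" "44 * (1 - a) * Q = 44 * Y" "P - 1 \<le> 40 * Y"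
    using assms by (simp_all add: X_def Y_def algebra_simps)
  ultimately show ?thesis
    using assms by (simp add: abs_le_iff)
qed

lemma power_mult_le_divide_power:
  fixes S B :: real
  assumes "0 < S" "S \<le> 1" "0 \<le> B"
  shows "S ^ m * B \<le> B / S ^ n"
proof -
  have "S ^ m * B \<le> 1 * B"
    using assms by (intro mult_right_mono power_le_one) auto
  also have "\<dots> \<le> B / S ^ n"
    using assms mult_right_le_one_le[of B "S ^ n"] by (simp add: le_divide_eq power_le_one)
  finally show ?thesis .
qed

section \<open>Derivatives of the residuals\<close>

lemma powr_kappa_minus:
  fixes S :: real
  assumes "0 < S" "1 \<le> i"
  shows "S powr (kappa - real i) = S powr (-1/8) / S ^ (i - 1)"
proof -
  have "S powr (kappa - real i) = S powr (-1/8 - real (i - 1))"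
    using assms by (intro arg_cong[where f = "\<lambda>t. S powr t"]) (simp add: kappa_def of_nat_diff)
  also have "\<dots> = S powr (-1/8) / S ^ (i - 1)"
    using assms by (simp only: powr_diff powr_realpow)
  finally show ?thesis .
qed

lemma abs_omega_res_le:
  fixes x :: real
  assumes a: "9/10 \<le> a" "a \<le> 1"
  shows "\<bar>omega_res a x\<bar> \<le> 40 * (1 - a) * \<bar>sin x\<bar> powr kappa"
proof (cases "sin x = 0")
  case True
  then show ?thesis
    by (simp add: omega_res_def omega_bar_def)
next
  case False
  define S P Q where "S = \<bar>sin x\<bar>" and "P = S powr (a - 1)" and "Q = S powr (-1/8)"
  have S: "0 < S" "S \<le> 1"
    using False by (auto simp: S_def)
  note PQ = powr_exponent_near_zero_bounds[OF S a, folded P_def Q_def]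
  have "omega_res a x = sin x * (P - 1)"
    by (simp add: omega_res_def omega_bar_eq P_def S_def algebra_simps)
  then have "\<bar>omega_res a x\<bar> = S * (P - 1)"
    using PQ by (simp add: abs_mult S_def)
  also have "\<dots> \<le> S * (40 * (1 - a) * Q)"
    using PQ S by (intro mult_left_mono) auto
  also have "\<dots> = 40 * (1 - a) * S powr kappa"
    using S powr_add[of S 1 "-1/8"] by (simp add: Q_def kappa_def)
  finally show ?thesis
    by (simp add: S_def)
qed

lemma abs_omega_bar'_sub_cos_le:
  fixes x :: real
  assumes a: "9/10 \<le> a" "a \<le> 1" and x: "sin x \<noteq> 0"
  shows "\<bar>omega_bar' a x - cos x\<bar> \<le> 41 * (1 - a) * \<bar>sin x\<bar> powr (kappa - 1)"
proof -
  define S P Q where "S = \<bar>sin x\<bar>" and "P = S powr (a - 1)" and "Q = S powr (-1/8)"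
  have S: "0 < S" "S \<le> 1"
    using x by (auto simp: S_def)
  note PQ = powr_exponent_near_zero_bounds[OF S a, folded P_def Q_def]
  have "\<bar>omega_bar' a x - cos x\<bar> = \<bar>cos x\<bar> * \<bar>a * P - 1\<bar>"
    by (simp add: omega_bar'_def P_def S_def abs_mult[symmetric] algebra_simps)
  also have "\<dots> \<le> 1 * (41 * (1 - a) * Q)"
    using PQ a by (intro mult_mono abs_mult_sub_one_le) auto
  finally show ?thesis
    by (simp add: Q_def S_def kappa_def)
qed

lemma abs_omega_bar''_add_sin_le:
  fixes x :: real
  assumes a: "9/10 \<le> a" "a \<le> 1" and x: "sin x \<noteq> 0"
  shows "\<bar>omega_bar'' a x + sin x\<bar> \<le> 42 * (1 - a) * \<bar>sin x\<bar> powr (kappa - 2)"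
proof -
  define S P Q where "S = \<bar>sin x\<bar>" and "P = S powr (a - 1)" and "Q = S powr (-1/8)"
  define B where "B = (1 - a) * Q"
  have S: "0 < S" "S \<le> 1"
    using x by (auto simp: S_def)
  note PQ = powr_exponent_near_zero_bounds[OF S a, folded P_def Q_def]
  have B: "0 \<le> B"
    using a PQ by (simp add: B_def)
  have "omega_bar'' a x + sin x = - ((1 - a) * (a * (cos x)\<^sup>2) * P / sin x) + sin x * (1 - a * P)"
    using x by (simp add: omega_bar''_def P_def S_def field_simps)
  also have "\<bar>\<dots>\<bar> \<le> B / S + 41 * (S * B)"
  proof (rule order_trans[OF abs_triangle_ineq add_mono])
    have "a * (cos x)\<^sup>2 \<le> 1"
      using a by (intro mult_le_one) (auto simp: abs_square_le_1)
    then have "(1 - a) * (a * (cos x)\<^sup>2) * P \<le> (1 - a) * 1 * Q"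
      using a PQ by (intro mult_mono mult_left_mono) auto
    then show "\<bar>- ((1 - a) * (a * (cos x)\<^sup>2) * P / sin x)\<bar> \<le> B / S"
      using a PQ S by (auto simp: abs_mult S_def B_def intro!: divide_right_mono)
    have "\<bar>1 - a * P\<bar> \<le> 41 * (1 - a) * Q"
      using a PQ abs_mult_sub_one_le[of a P Q] by (simp add: abs_minus_commute)
    then have "S * \<bar>1 - a * P\<bar> \<le> S * (41 * (1 - a) * Q)"
      using S by (intro mult_left_mono) auto
    then show "\<bar>sin x * (1 - a * P)\<bar> \<le> 41 * (S * B)"
      by (simp add: abs_mult S_def B_def mult_ac)
  qed
  also have "\<dots> \<le> 42 * (B / S)"
    using power_mult_le_divide_power[OF S B, of 1 1] by simp
  also have "\<dots> = 42 * (1 - a) * S powr (kappa - 2)"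
    using powr_kappa_minus[OF S(1), of 2] by (simp add: B_def Q_def)
  finally show ?thesis
    by (simp add: S_def)
qed

lemma abs_omega_bar'''_add_cos_le:
  fixes x :: real
  assumes a: "9/10 \<le> a" "a \<le> 1" and x: "sin x \<noteq> 0"
  shows "\<bar>omega_bar''' a x + cos x\<bar> \<le> 45 * (1 - a) * \<bar>sin x\<bar> powr (kappa - 3)"
proof -
  define S P Q where "S = \<bar>sin x\<bar>" and "P = S powr (a - 1)" and "Q = S powr (-1/8)"
  define B where "B = (1 - a) * Q"
  have S: "0 < S" "S \<le> 1"
    using x by (auto simp: S_def)
  note PQ = powr_exponent_near_zero_bounds[OF S a, folded P_def Q_def]
  have B: "0 \<le> B"
    using a PQ by (simp add: B_def)
  have "omega_bar''' a x + cos x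
      = (1 - a) * (a * (2 - a) * (cos x)^3) * P / (sin x)\<^sup>2 - cos x * (a * (3 * a - 2) * P - 1)"
    using x by (simp add: omega_bar'''_def P_def S_def field_simps)
  also have "\<bar>\<dots>\<bar> \<le> B / S\<^sup>2 + 44 * B"
  proof (rule order_trans[OF abs_triangle_ineq4 add_mono])
    have "1 - a * (2 - a) = (1 - a)\<^sup>2"
      by (simp add: algebra_simps power2_eq_square)
    then have "a * (2 - a) \<le> 1"
      using zero_le_power2[of "1 - a"] by linarith
    then have "\<bar>a * (2 - a) * (cos x)^3\<bar> \<le> 1"
      using a by (auto simp: abs_mult power_abs intro!: mult_le_one power_le_one)
    then have "(1 - a) * \<bar>a * (2 - a) * (cos x)^3\<bar> * P \<le> (1 - a) * 1 * Q"
      using a PQ by (intro mult_mono mult_left_mono) auto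
    then show "\<bar>(1 - a) * (a * (2 - a) * (cos x)^3) * P / (sin x)\<^sup>2\<bar> \<le> B / S\<^sup>2"
      using a PQ S by (auto simp: abs_mult S_def B_def intro!: divide_right_mono)
    have "\<bar>a * (3 * a - 2) * P - 1\<bar> \<le> 44 * B"
      unfolding B_def mult.assoc[symmetric] using a PQ by (intro abs_cubic_mult_sub_one_le) auto
    then have "\<bar>cos x\<bar> * \<bar>a * (3 * a - 2) * P - 1\<bar> \<le> 1 * (44 * B)"
      by (intro mult_mono) auto
    then show "\<bar>cos x * (a * (3 * a - 2) * P - 1)\<bar> \<le> 44 * B"
      by (simp add: abs_mult)
  qed
  also have "\<dots> \<le> 45 * (B / S\<^sup>2)"
    using power_mult_le_divide_power[OF S B, of 0 2] by simp
  also have "\<dots> = 45 * (1 - a) * S powr (kappa - 3)"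
    using powr_kappa_minus[OF S(1), of 3] by (simp add: B_def Q_def)
  finally show ?thesis
    by (simp add: S_def)
qed

lemma abs_higher_deriv_omega_res_le:
  fixes x :: real
  assumes a: "9/10 \<le> a" "a \<le> 1" and i: "i \<le> 3" "i = 0 \<or> sin x \<noteq> 0"
  shows "\<bar>(deriv ^^ i) (omega_res a) x\<bar> \<le> 45 * (1 - a) * \<bar>sin x\<bar> powr (kappa - real i)"
proof -
  have scale: "\<bar>v\<bar> \<le> 45 * (1 - a) * T" if "\<bar>v\<bar> \<le> c * (1 - a) * T" "c \<le> 45" "0 \<le> T"
    for v c T :: real
    using that(1) by (rule order_trans) (use that a in \<open>intro mult_right_mono, auto\<close>)
  consider "i = 0" | "i = 1" | "i = 2" | "i = 3"
    using i by linarith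
  then show ?thesis
  proof cases
    case 1
    then show ?thesis
      using scale[OF abs_omega_res_le[OF a]] by simp
  next
    case 2
    then show ?thesis
      using scale[OF abs_omega_bar'_sub_cos_le[OF a]] higher_deriv_omega_res(1) i by simp
  next
    case 3
    then show ?thesis
      using scale[OF abs_omega_bar''_add_sin_le[OF a]] higher_deriv_omega_res(2) i by simp
  next
    case 4
    then show ?thesis
      using scale[OF abs_omega_bar'''_add_cos_le[OF a]] higher_deriv_omega_res(3) i by simp
  qed
qed

lemma abs_higher_deriv_residuals_le:
  fixes x :: real
  assumes \<alpha>: "9/10 < \<alpha>" "\<alpha> < 1" and i: "i \<le> 3" "i = 0 \<or> sin x \<noteq> 0"
  shows "\<bar>(deriv ^^ i) (omega_res \<alpha>) x\<bar> + \<bar>(deriv ^^ i) (u_res \<alpha>) x\<bar>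
    \<le> 68 * \<bar>\<alpha> - 1\<bar> * \<bar>sin x\<bar> powr (kappa - real i)"
proof -
  define T where "T = \<bar>sin x\<bar> powr (kappa - real i)"
  define B where "B = (1 - \<alpha>) * T"
  have "\<bar>(deriv ^^ i) (omega_res \<alpha>) x\<bar> \<le> 45 * B"
    unfolding B_def T_def mult.assoc[symmetric] using \<alpha> i by (intro abs_higher_deriv_omega_res_le) auto
  moreover have "\<bar>(deriv ^^ i) (u_res \<alpha>) x\<bar> \<le> 45 * ((1 - (1 + \<alpha>) / 2) * T)"
    unfolding T_def u_res_eq_omega_res mult.assoc[symmetric] using \<alpha> i
    by (intro abs_higher_deriv_omega_res_le) auto
  ultimately have "\<bar>(deriv ^^ i) (omega_res \<alpha>) x\<bar> + \<bar>(deriv ^^ i) (u_res \<alpha>) x\<bar>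
      \<le> 45 * B + 45 * ((1 - (1 + \<alpha>) / 2) * T)"
    by (rule add_mono)
  also have "\<dots> = 135 / 2 * B"
    by (simp add: B_def field_simps)
  also have "\<dots> \<le> 68 * B"
    using \<alpha> by (simp add: B_def T_def)
  also have "\<dots> = 68 * \<bar>\<alpha> - 1\<bar> * \<bar>sin x\<bar> powr (kappa - real i)"
    using \<alpha> by (simp add: B_def T_def)
  finally show ?thesis .
qed

section \<open>The stream function\<close>

lemma periodic_representative:
  fixes f :: "real \<Rightarrow> 'a"
  assumes periodic: "\<And>x. f (x + p) = f x" and "0 < p"
  obtains y where "a \<le> y" "y \<le> a + p" "f y = f x"
proof -
  interpret periodic_fun_simple f p
    by standard (rule periodic)
  define k where "k = \<lfloor>(x - a) / p\<rfloor>"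
  have "of_int k * p \<le> x - a" "x - a < (of_int k + 1) * p"
    unfolding k_def using \<open>0 < p\<close> by (auto intro: floor_divide_lower floor_divide_upper)
  moreover have "f (x - of_int k * p) = f x"
    by (rule minus_of_int)
  ultimately show ?thesis
    using that[of "x - of_int k * p"] by (simp add: algebra_simps)
qed

lemma odd_periodic_bounds:
  fixes r r' r'' :: "real \<Rightarrow> real"
  assumes odd: "\<And>x. r (- x) = - r x" and periodic: "\<And>x. r (x + 2 * pi) = r x"
    and r': "\<And>x. (r has_real_derivative r' x) (at x)"
    and r'': "\<And>x. (r' has_real_derivative r'' x) (at x)"
    and bound: "\<And>x. \<bar>r'' x\<bar> \<le> M"
  shows "\<bar>r' x\<bar> \<le> pi * M" and "\<bar>r x\<bar> \<le> pi\<^sup>2 * M"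
proof -
  have lipschitz: "\<bar>f u - f v\<bar> \<le> B * \<bar>u - v\<bar>"
    if "\<And>x. (f has_real_derivative f' x) (at x)" "\<And>x. \<bar>f' x\<bar> \<le> B" for f f' :: "real \<Rightarrow> real" and B u v
    using field_differentiable_bound[OF convex_UNIV, of f f' B u v] that by simp
  have r0: "r 0 = 0" and r_pi: "r pi = 0"
    using odd[of 0] odd[of pi] periodic[of "- pi"] by simp_all
  obtain z where "0 < z" "z < pi" "r pi - r 0 = (pi - 0) * r' z"
    using MVT2[of 0 pi r r'] r' by auto
  then have r'z: "r' z = 0"
    using r0 r_pi by simp
  have r'_periodic: "r' (x + 2 * pi) = r' x" for x
  proof (rule DERIV_unique)
    show "(r has_real_derivative r' (x + 2 * pi)) (at x)"
      using DERIV_shift[of r "r' (x + 2 * pi)" x "2 * pi"] r' periodic by simp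
  qed (rule r')
  have r'_bound: "\<bar>r' t\<bar> \<le> pi * M" for t
  proof -
    obtain y where y: "z - pi \<le> y" "y \<le> z - pi + 2 * pi" "r' y = r' t"
      using periodic_representative[of r' "2 * pi" "z - pi" t] r'_periodic by auto
    have "\<bar>r' y - r' z\<bar> \<le> M * \<bar>y - z\<bar>"
      by (rule lipschitz[OF r'' bound])
    also have "\<dots> \<le> M * pi"
      using y bound[of 0] by (intro mult_left_mono) auto
    finally show ?thesis
      using y r'z by (simp add: mult.commute)
  qed
  then show "\<bar>r' x\<bar> \<le> pi * M" .
  obtain y where y: "- pi \<le> y" "y \<le> - pi + 2 * pi" "r y = r x"
    using periodic_representative[of r "2 * pi" "- pi" x] periodic by auto
  have "\<bar>r y - r 0\<bar> \<le> (pi * M) * \<bar>y - 0\<bar>"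
    by (rule lipschitz[OF r' r'_bound])
  also have "\<dots> \<le> (pi * M) * pi"
    using y bound[of 0] by (intro mult_left_mono) auto
  finally show "\<bar>r x\<bar> \<le> pi\<^sup>2 * M"
    using y r0 by (simp add: power2_eq_square mult_ac)
qed

lemma psi_bar_residual_bounds:
  fixes x :: real
  assumes \<alpha>: "9/10 \<le> \<alpha>" "\<alpha> \<le> 1" and \<psi>: "is_psi_bar \<alpha> \<psi> \<psi>'"
  shows "\<bar>\<psi> x - sin x\<bar> \<le> 640 * (1 - \<alpha>)" and "\<bar>\<psi>' x - cos x\<bar> \<le> 640 * (1 - \<alpha>)"
proof -
  define M where "M = 40 * (1 - \<alpha>)"
  have M: "0 \<le> M"
    using \<alpha> by (simp add: M_def)
  have "\<bar>- omega_res \<alpha> t\<bar> \<le> M" for t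
  proof -
    have "\<bar>omega_res \<alpha> t\<bar> \<le> M * \<bar>sin t\<bar> powr kappa"
      using abs_omega_res_le[OF \<alpha>] by (simp add: M_def)
    also have "\<dots> \<le> M * 1"
      using M by (intro mult_left_mono powr_le1) (auto simp: kappa_def)
    finally show ?thesis
      by simp
  qed
  moreover have "(\<lambda>t. \<psi> t - sin t) (- t) = - (\<lambda>t. \<psi> t - sin t) t"
    and "(\<lambda>t. \<psi> t - sin t) (t + 2 * pi) = (\<lambda>t. \<psi> t - sin t) t"
    and "((\<lambda>t. \<psi> t - sin t) has_real_derivative \<psi>' t - cos t) (at t)"
    and "((\<lambda>t. \<psi>' t - cos t) has_real_derivative - omega_res \<alpha> t) (at t)" for t
    using \<psi> unfolding is_psi_bar_def omega_res_def by (auto intro!: derivative_eq_intros)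
  ultimately have "\<bar>\<psi>' x - cos x\<bar> \<le> pi * M" and "\<bar>\<psi> x - sin x\<bar> \<le> pi\<^sup>2 * M"
    using odd_periodic_bounds[of "\<lambda>t. \<psi> t - sin t" "\<lambda>t. \<psi>' t - cos t" "\<lambda>t. - omega_res \<alpha> t" M]
    by auto
  moreover have "pi * M \<le> 16 * M" and "pi\<^sup>2 * M \<le> 16 * M"
    using M pi_less_4 power_strict_mono[of pi 4 2] by (auto intro!: mult_right_mono)
  ultimately show "\<bar>\<psi> x - sin x\<bar> \<le> 640 * (1 - \<alpha>)" and "\<bar>\<psi>' x - cos x\<bar> \<le> 640 * (1 - \<alpha>)"
    by (simp_all add: M_def)
qed

section \<open>The combination \<open>G\<close>\<close>

lemma one_minus_cos_le_abs: "1 - cos x \<le> \<bar>x :: real\<bar>"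
proof -
  have "1 - cos x = 2 * (sin (x / 2))\<^sup>2"
    using cos_double_sin[of "x / 2"] by simp
  also have "\<dots> = 2 * (\<bar>sin (x / 2)\<bar> * \<bar>sin (x / 2)\<bar>)"
    by (simp add: power2_eq_square)
  also have "\<dots> \<le> 2 * (\<bar>sin (x / 2)\<bar> * 1)"
    by (intro mult_left_mono) auto
  also have "\<dots> \<le> \<bar>x\<bar>"
    using abs_sin_x_le_abs_x[of "x / 2"] by simp
  finally show ?thesis .
qed

lemma sin_sq_mult_powr_le_abs: "(sin x)\<^sup>2 * \<bar>sin x\<bar> powr (-1/8) \<le> \<bar>x :: real\<bar>"
proof (cases "sin x = 0")
  case False
  define S where "S = \<bar>sin x\<bar>"
  have S: "0 < S" "S \<le> 1"
    using False by (auto simp: S_def)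
  have "(sin x)\<^sup>2 * S powr (-1/8) = S * S powr (7/8)"
    using S powr_add[of S 1 "-1/8"] by (simp add: S_def power2_eq_square)
  also have "\<dots> \<le> S * 1"
    using S by (intro mult_left_mono powr_le1) auto
  also have "\<dots> \<le> \<bar>x\<bar>"
    by (simp add: S_def abs_sin_x_le_abs_x)
  finally show ?thesis
    by (simp add: S_def)
qed simp

lemma G_eq:
  fixes \<alpha> y :: real
  defines "b \<equiv> (1 + \<alpha>) / 2"
  assumes "sin y \<noteq> 0"
  shows "G \<alpha> y = (b - 1) * omega_bar' b y - sin y * (omega_bar'' b y + sin y)"
proof -
  have "deriv (u_bar \<alpha>) y = omega_bar' b y"
    unfolding u_bar_eq_omega_bar b_def using assms by (intro DERIV_imp_deriv has_real_derivative_omega_bar)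
  moreover have "(deriv ^^ 2) (u_res \<alpha>) y = omega_bar'' b y + sin y"
    unfolding u_res_eq_omega_res b_def by (rule higher_deriv_omega_res(2)[OF assms(2)])
  ultimately show ?thesis
    by (simp add: G_def b_def diff_divide_distrib)
qed

lemma deriv_G_eq:
  fixes \<alpha> x :: real
  defines "b \<equiv> (1 + \<alpha>) / 2"
  assumes x: "sin x \<noteq> 0"
  shows "deriv (G \<alpha>) x = (b - 1) * omega_bar'' b x
    - (cos x * (omega_bar'' b x + sin x) + sin x * (omega_bar''' b x + cos x))"
proof -
  have "eventually (\<lambda>y. sin y \<noteq> 0) (nhds x)"
    using eventually_nhds_in_open[OF open_sin_neq_zero] x by simp
  then have "eventually (\<lambda>y. G \<alpha> y = (b - 1) * omega_bar' b y - sin y * (omega_bar'' b y + sin y)) (nhds x)"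
    by (rule eventually_mono) (simp add: G_eq b_def)
  then have "deriv (G \<alpha>) x = deriv (\<lambda>y. (b - 1) * omega_bar' b y - sin y * (omega_bar'' b y + sin y)) x"
    by (rule deriv_cong_ev) (rule refl)
  also have "\<dots> = (b - 1) * omega_bar'' b x
    - (cos x * (omega_bar'' b x + sin x) + sin x * (omega_bar''' b x + cos x))"
    by (rule DERIV_imp_deriv, (rule derivative_eq_intros refl has_real_derivative_omega_bar'[OF x]
        has_real_derivative_omega_bar''[OF x])+) (simp add: algebra_simps)
  finally show ?thesis .
qed

lemma sin_sq_mult_powr_bounds:
  fixes b x :: real
  assumes b: "9/10 \<le> b" "b \<le> 1"
  defines "P \<equiv> \<bar>sin x\<bar> powr (b - 1)"
  shows "(sin x)\<^sup>2 * P \<le> \<bar>x\<bar>"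
    and "(sin x)\<^sup>2 * \<bar>b * P - 1\<bar> \<le> 41 * (1 - b) * \<bar>x\<bar>"
    and "(sin x)\<^sup>2 * \<bar>b * (3 * b - 2) * P - 1\<bar> \<le> 44 * (1 - b) * \<bar>x\<bar>"
proof -
  define Q where "Q = \<bar>sin x\<bar> powr (-1/8)"
  have S: "0 < \<bar>sin x\<bar>" "\<bar>sin x\<bar> \<le> 1" if "sin x \<noteq> 0"
    using that by auto
  note PQ = powr_exponent_near_zero_bounds[OF S b, folded P_def Q_def]
  have sin_sq_Q: "(sin x)\<^sup>2 * Q \<le> \<bar>x\<bar>"
    using sin_sq_mult_powr_le_abs[of x] by (simp add: Q_def)
  have "(sin x)\<^sup>2 * P \<le> (sin x)\<^sup>2 * Q"
    using PQ by (cases "sin x = 0") (auto intro: mult_left_mono)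
  with sin_sq_Q show "(sin x)\<^sup>2 * P \<le> \<bar>x\<bar>"
    by linarith
  have "\<bar>b * P - 1\<bar> \<le> 41 * (1 - b) * Q" if "sin x \<noteq> 0"
    using b PQ that by (intro abs_mult_sub_one_le) auto
  then have "(sin x)\<^sup>2 * \<bar>b * P - 1\<bar> \<le> (sin x)\<^sup>2 * (41 * (1 - b) * Q)"
    by (cases "sin x = 0") (auto intro: mult_left_mono)
  also have "\<dots> \<le> 41 * (1 - b) * \<bar>x\<bar>"
    using b sin_sq_Q mult_left_mono[OF sin_sq_Q, of "41 * (1 - b)"] by (simp add: mult_ac)
  finally show "(sin x)\<^sup>2 * \<bar>b * P - 1\<bar> \<le> 41 * (1 - b) * \<bar>x\<bar>" .
  have "\<bar>b * (3 * b - 2) * P - 1\<bar> \<le> 44 * (1 - b) * Q" if "sin x \<noteq> 0"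
    using b PQ that by (intro abs_cubic_mult_sub_one_le) auto
  then have "(sin x)\<^sup>2 * \<bar>b * (3 * b - 2) * P - 1\<bar> \<le> (sin x)\<^sup>2 * (44 * (1 - b) * Q)"
    by (cases "sin x = 0") (auto intro: mult_left_mono)
  also have "\<dots> \<le> 44 * (1 - b) * \<bar>x\<bar>"
    using b sin_sq_Q mult_left_mono[OF sin_sq_Q, of "44 * (1 - b)"] by (simp add: mult_ac)
  finally show "(sin x)\<^sup>2 * \<bar>b * (3 * b - 2) * P - 1\<bar> \<le> 44 * (1 - b) * \<bar>x\<bar>" .
qed

lemma abs_G_le:
  fixes x :: real
  assumes \<alpha>: "9/10 < \<alpha>" "\<alpha> < 1" and x: "sin x \<noteq> 0"
  shows "\<bar>G \<alpha> x\<bar> \<le> 21 * (1 - \<alpha>) * \<bar>x\<bar> * \<bar>sin x\<bar> powr ((\<alpha> - 1) / 2)"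
proof -
  define b where "b = (1 + \<alpha>) / 2"
  define P where "P = \<bar>sin x\<bar> powr (b - 1)"
  define D where "D = (1 - b) * \<bar>x\<bar>"
  have b: "9/10 \<le> b" "b \<le> 1" and b_\<alpha>: "1 - b = (1 - \<alpha>) / 2" "b - 1 = (\<alpha> - 1) / 2"
    using \<alpha> by (auto simp: b_def field_simps)
  have P: "1 \<le> P"
    unfolding P_def using x b by (intro powr_exponent_near_zero_bounds) auto
  have DP: "D \<le> D * P"
    using mult_left_mono[OF P, of D] b by (simp add: D_def)
  note sin_sq = sin_sq_mult_powr_bounds[OF b, of x, folded P_def]
  have "G \<alpha> x = - ((1 - b) * (b * cos x) * P * (1 - cos x)) + (sin x)\<^sup>2 * (b * P - 1)"
    unfolding G_eq[where \<alpha> = \<alpha>, OF x, folded b_def] using x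
    by (simp add: omega_bar'_def omega_bar''_def P_def field_simps power2_eq_square
        del: sin_cos_squared_add3)
  also have "\<bar>\<dots>\<bar> \<le> D * P + 41 * D"
  proof (rule order_trans[OF abs_triangle_ineq add_mono])
    have "(1 - b) * \<bar>b * cos x\<bar> * P * (1 - cos x) \<le> (1 - b) * 1 * P * \<bar>x\<bar>"
      using b P one_minus_cos_le_abs[of x]
      by (intro mult_mono mult_left_mono) (auto simp: abs_mult mult_le_one)
    then show "\<bar>- ((1 - b) * (b * cos x) * P * (1 - cos x))\<bar> \<le> D * P"
      using b P by (simp add: abs_mult D_def mult_ac)
    show "\<bar>(sin x)\<^sup>2 * (b * P - 1)\<bar> \<le> 41 * D"
      using sin_sq(2) by (simp add: abs_mult D_def mult_ac)
  qed
  also have "\<dots> \<le> 42 * (D * P)"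
    using DP by linarith
  also have "\<dots> = 21 * (1 - \<alpha>) * \<bar>x\<bar> * \<bar>sin x\<bar> powr ((\<alpha> - 1) / 2)"
    unfolding D_def P_def b_\<alpha> by simp
  finally show ?thesis .
qed

lemma abs_sin_mult_deriv_G_le:
  fixes x :: real
  assumes \<alpha>: "9/10 < \<alpha>" "\<alpha> < 1" and x: "sin x \<noteq> 0"
  shows "\<bar>sin x * deriv (G \<alpha>) x\<bar> \<le> 44 * (1 - \<alpha>) * \<bar>x\<bar> * \<bar>sin x\<bar> powr ((\<alpha> - 1) / 2)"
proof -
  define b where "b = (1 + \<alpha>) / 2"
  define P where "P = \<bar>sin x\<bar> powr (b - 1)"
  define D where "D = (1 - b) * \<bar>x\<bar>"
  have b: "9/10 \<le> b" "b \<le> 1" and b_\<alpha>: "1 - b = (1 - \<alpha>) / 2" "b - 1 = (\<alpha> - 1) / 2"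
    using \<alpha> by (auto simp: b_def field_simps)
  have P: "1 \<le> P"
    unfolding P_def using x b by (intro powr_exponent_near_zero_bounds) auto
  have DP: "D \<le> D * P"
    using mult_left_mono[OF P, of D] b by (simp add: D_def)
  note sin_sq = sin_sq_mult_powr_bounds[OF b, of x, folded P_def]
  have "sin x * deriv (G \<alpha>) x = (1 - b) * (b * (1 - b) * (cos x)\<^sup>2) * P * (1 - cos x)
      + (1 - b) * b * ((sin x)\<^sup>2 * P)
      + (sin x)\<^sup>2 * cos x * ((b * P - 1) + (b * (3 * b - 2) * P - 1))"
    unfolding deriv_G_eq[where \<alpha> = \<alpha>, OF x, folded b_def] using x
    by (simp add: omega_bar''_def omega_bar'''_def P_def field_simps power2_eq_square power3_eq_cube
        del: sin_cos_squared_add3)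
  also have "\<bar>\<dots>\<bar> \<le> D * P + D + 85 * D"
  proof (intro order_trans[OF abs_triangle_ineq add_mono] order_trans[OF abs_triangle_ineq add_mono])
    have "(1 - b) * (b * (1 - b) * (cos x)\<^sup>2) * P * (1 - cos x) \<le> (1 - b) * 1 * P * \<bar>x\<bar>"
      using b P one_minus_cos_le_abs[of x]
      by (intro mult_mono mult_left_mono mult_le_one) (auto simp: abs_square_le_1)
    then show "\<bar>(1 - b) * (b * (1 - b) * (cos x)\<^sup>2) * P * (1 - cos x)\<bar> \<le> D * P"
      using b P by (simp add: abs_mult D_def mult_ac)
    have "b * ((sin x)\<^sup>2 * P) \<le> 1 * \<bar>x\<bar>"
      using b P sin_sq(1) by (intro mult_mono) auto
    then have "(1 - b) * (b * ((sin x)\<^sup>2 * P)) \<le> (1 - b) * \<bar>x\<bar>"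
      using b by (intro mult_left_mono) auto
    then show "\<bar>(1 - b) * b * ((sin x)\<^sup>2 * P)\<bar> \<le> D"
      using b P by (simp add: abs_mult D_def mult.assoc)
    have "\<bar>(sin x)\<^sup>2 * cos x * ((b * P - 1) + (b * (3 * b - 2) * P - 1))\<bar>
        \<le> (sin x)\<^sup>2 * 1 * (\<bar>b * P - 1\<bar> + \<bar>b * (3 * b - 2) * P - 1\<bar>)"
      unfolding abs_mult by (intro mult_mono abs_triangle_ineq) auto
    then show "\<bar>(sin x)\<^sup>2 * cos x * ((b * P - 1) + (b * (3 * b - 2) * P - 1))\<bar> \<le> 85 * D"
      using sin_sq(2,3) by (simp add: D_def algebra_simps)
  qed
  also have "\<dots> \<le> 87 * (D * P)"
    using DP by linarith
  also have "\<dots> = 87 / 2 * (1 - \<alpha>) * (\<bar>x\<bar> * \<bar>sin x\<bar> powr ((\<alpha> - 1) / 2))"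
    unfolding D_def P_def b_\<alpha> by simp
  also have "\<dots> \<le> 44 * (1 - \<alpha>) * (\<bar>x\<bar> * \<bar>sin x\<bar> powr ((\<alpha> - 1) / 2))"
    using \<alpha> by (intro mult_right_mono) auto
  finally show ?thesis
    by (simp add: mult.assoc)
qed

lemma abs_G_add_abs_sin_mult_deriv_G_le:
  fixes x :: real
  assumes \<alpha>: "9/10 < \<alpha>" "\<alpha> < 1" and x: "sin x \<noteq> 0"
  shows "\<bar>G \<alpha> x\<bar> + \<bar>sin x * deriv (G \<alpha>) x\<bar> \<le> 65 * \<bar>\<alpha> - 1\<bar> * \<bar>x\<bar> * \<bar>sin x\<bar> powr (\<alpha> - 1)"
proof -
  define T where "T = \<bar>x\<bar> * \<bar>sin x\<bar> powr ((\<alpha> - 1) / 2)"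
  have "\<bar>G \<alpha> x\<bar> + \<bar>sin x * deriv (G \<alpha>) x\<bar> \<le> 21 * (1 - \<alpha>) * T + 44 * (1 - \<alpha>) * T"
    unfolding T_def mult.assoc[symmetric]
    by (intro add_mono abs_G_le abs_sin_mult_deriv_G_le \<alpha> x)
  also have "\<dots> = 65 * \<bar>\<alpha> - 1\<bar> * T"
    using \<alpha> by (simp add: algebra_simps)
  also have "\<dots> \<le> 65 * \<bar>\<alpha> - 1\<bar> * (\<bar>x\<bar> * \<bar>sin x\<bar> powr (\<alpha> - 1))"
    unfolding T_def using \<alpha> by (intro mult_left_mono powr_mono') auto
  finally show ?thesis
    by (simp add: mult.assoc)
qed

theorem mainTheorem14:
  shows "\<exists>C>0. \<forall>\<alpha>::real. 9/10 < \<alpha> \<and> \<alpha> < 1 \<longrightarrow>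
     (\<forall>i\<le>3. \<forall>x::real. (i = 0 \<or> sin x \<noteq> 0) \<longrightarrow>
        \<bar>(deriv ^^ i) (omega_res \<alpha>) x\<bar> + \<bar>(deriv ^^ i) (u_res \<alpha>) x\<bar>
          \<le> C * \<bar>\<alpha> - 1\<bar> * \<bar>sin x\<bar> powr (kappa - real i))
   \<and> (\<forall>\<psi> \<psi>'. is_psi_bar \<alpha> \<psi> \<psi>' \<longrightarrow>
        (\<forall>x. \<bar>\<psi> x - sin x\<bar> \<le> C * \<bar>\<alpha> - 1\<bar> \<and> \<bar>\<psi>' x - cos x\<bar> \<le> C * \<bar>\<alpha> - 1\<bar>))
   \<and> (\<forall>x. -pi \<le> x \<and> x \<le> pi \<and> x \<notin> {0, pi, -pi} \<longrightarrow>
        \<bar>G \<alpha> x\<bar> + \<bar>sin x * deriv (G \<alpha>) x\<bar>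
          \<le> C * sqrt \<bar>\<alpha> - 1\<bar> * \<bar>x\<bar> * \<bar>sin x\<bar> powr (\<alpha> - 1))"
  apply (intro exI[of _ 1000] conjI allI impI)
  subgoal
    by simp
  subgoal for \<alpha> i x
    by (rule order_trans[OF abs_higher_deriv_residuals_le]) (auto intro!: mult_right_mono)
  subgoal for \<alpha> \<psi> \<psi>' x
    using psi_bar_residual_bounds(1)[of \<alpha> \<psi> \<psi>' x] by auto
  subgoal for \<alpha> \<psi> \<psi>' x
    using psi_bar_residual_bounds(2)[of \<alpha> \<psi> \<psi>' x] by auto
  subgoal for \<alpha> x
  proof -
    assume \<alpha>: "9/10 < \<alpha> \<and> \<alpha> < 1" and x: "-pi \<le> x \<and> x \<le> pi \<and> x \<notin> {0, pi, -pi}"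
    have "sin x \<noteq> 0"
      using x sin_eq_0_pi[of x] by force
    moreover have "\<bar>\<alpha> - 1\<bar> \<le> sqrt \<bar>\<alpha> - 1\<bar>"
      using \<alpha> by (intro real_le_rsqrt) (simp add: power2_eq_square mult_le_one)
    ultimately show ?thesis
      using \<alpha> by (intro order_trans[OF abs_G_add_abs_sin_mult_deriv_G_le]) (auto intro!: mult_right_mono)
  qed
  done

end
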